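(* For every $(0,1)$-matrix $A$ of size $n\times n$ and every $k\in\mathbb N$, \[\mathrm{pdet}(A,k)=\sum_{W\in\mathcal W_{G_A,k}}\mathrm{sign}(W)\cdot\mathrm{wt}(W).\]
   Context: For $n>0$ let $S_n$ be the set of permutations of $\{1,\dots,n\}$ and $S_{n,k}=\{\pi\in S_n: |\{i:\pi(i)\ne i\}|=k\}$. For an $n\times n$ matrix $A=(a_{i,j})$, $\mathrm{pdet}(A,k)=\sum_{\pi\in S_{n,k}}\mathrm{sign}(\pi)\prod_{i:\pi(i)\ne i}a_{i,\pi(i)}$. $G_A$ is the weighted directed graph on vertex set $\{1,\dots,n\}$ with weighted adjacency matrix $A$. A clow in a directed graph $G$ on $\{1,\dots,n\}$ is a walk $C=(w_1,\dots,w_{r-1},w_r=w_1)$ such that $w_1$ is the minimum of $w_1,\dots,w_{r-1}$ and $w_1\ne w_j$ for all $1<j<r$; $w_1$ is its head $\mathrm{head}(C)$. A $k$-clow sequence is a sequence $W=(C_1,\dots,C_{r'})$ of clows with $\mathrm{head}(C_1)<\dots<\mathrm{head}(C_{r'})$, such that the total number of edges in the clows (with multiplicity) is exactly $k$, every clow has at least two edges, and no self-loop $(i,i)$ occurs in any clow. $\mathcal W_{G,k}$ is the set of all $k$-clow sequences of $G$. For $W\in\mathcal W_{G,k}$ with $r'$ clows, $\mathrm{sign}(W)=(-1)^{2n-k+r'}$. $\mathrm{wt}(W)$ is the product of the weights of all edges of all clows of $W$ (with multiplicity). *)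

theory Defs
  imports "HOL-Combinatorics.Permutations"
begin

text \<open>Matrices are n x n, indexed by 1..n, represented as functions nat => nat => int.
  The weighted digraph G_A has vertex set 1..n, an edge (i,j) iff A i j \<noteq> 0, of weight A i j.\<close>

definition S_nk :: "nat \<Rightarrow> nat \<Rightarrow> (nat \<Rightarrow> nat) set" where
  "S_nk n k = {\<pi>. \<pi> permutes {1..n} \<and> card {i \<in> {1..n}. \<pi> i \<noteq> i} = k}"

definition pdet :: "nat \<Rightarrow> (nat \<Rightarrow> nat \<Rightarrow> int) \<Rightarrow> nat \<Rightarrow> int" where
  "pdet n A k = (\<Sum>\<pi>\<in>S_nk n k. sign \<pi> * (\<Prod>i\<in>{i \<in> {1..n}. \<pi> i \<noteq> i}. A i (\<pi> i)))"

definition is_edge :: "(nat \<Rightarrow> nat \<Rightarrow> int) \<Rightarrow> nat \<Rightarrow> nat \<Rightarrow> bool" where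
  "is_edge A i j \<longleftrightarrow> A i j \<noteq> 0"

text \<open>A walk is represented by its full vertex list [w_1, ..., w_r]; its edges (with multiplicity)
  are the consecutive pairs.\<close>
definition walk_edges :: "nat list \<Rightarrow> (nat \<times> nat) list" where
  "walk_edges C = zip C (tl C)"

definition is_walk :: "nat \<Rightarrow> (nat \<Rightarrow> nat \<Rightarrow> int) \<Rightarrow> nat list \<Rightarrow> bool" where
  "is_walk n A C \<longleftrightarrow> C \<noteq> [] \<and> set C \<subseteq> {1..n} \<and>
     (\<forall>(a, b) \<in> set (walk_edges C). is_edge A a b)"

definition is_clow :: "nat \<Rightarrow> (nat \<Rightarrow> nat \<Rightarrow> int) \<Rightarrow> nat list \<Rightarrow> bool" where
  "is_clow n A C \<longleftrightarrow> is_walk n A C \<and> length C \<ge> 2 \<and> last C = hd C \<and>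
     hd C = Min (set (butlast C)) \<and>
     (\<forall>j. 0 < j \<and> j < length C - 1 \<longrightarrow> C ! j \<noteq> hd C)"

definition head :: "nat list \<Rightarrow> nat" where
  "head C = hd C"

definition num_edges :: "nat list \<Rightarrow> nat" where
  "num_edges C = length (walk_edges C)"

definition clow_seqs :: "nat \<Rightarrow> (nat \<Rightarrow> nat \<Rightarrow> int) \<Rightarrow> nat \<Rightarrow> nat list list set" where
  "clow_seqs n A k = {W. (\<forall>C \<in> set W. is_clow n A C \<and> num_edges C \<ge> 2 \<and>
                              (\<forall>(a, b) \<in> set (walk_edges C). a \<noteq> b)) \<and>
                         sorted_wrt (<) (map head W) \<and>
                         sum_list (map num_edges W) = k}"

text \<open>sign(W) = (-1)^(2n - k + r'), exponent taken in the integers.\<close>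
definition clow_seq_sign :: "nat \<Rightarrow> nat \<Rightarrow> nat list list \<Rightarrow> int" where
  "clow_seq_sign n k W = (if even (2 * int n - int k + int (length W)) then 1 else -1)"

definition clow_seq_wt :: "(nat \<Rightarrow> nat \<Rightarrow> int) \<Rightarrow> nat list list \<Rightarrow> int" where
  "clow_seq_wt A W = prod_list (map (\<lambda>C. prod_list (map (\<lambda>(a, b). A a b) (walk_edges C))) W)"

end

theory Submission
  imports Defs "HOL-Computational_Algebra.Formal_Power_Series"
begin

(* pdet A k is the coefficient of X^k in det (I + X A'), where A' is A with its diagonal
   set to zero. Deleting the smallest index h from the index set {h..n} is a Schur complement
   step: det over {h..n} equals det over {h+1..n} times 1 - X^2 a (I + X B)^-1 c, where B is A'
   restricted to {h+1..n} and a, c are the row and the column of h. Expanding the inverse as a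
   Neumann series, the X^m coefficient of the subtracted term is (-1)^m times the total weight of
   the clows of length m with head h. The product of these factors for h = n, ..., 1 is therefore
   the signed generating function of the clow sequences with increasing heads. *)

section \<open>Determinants over finite index sets\<close>

definition det_on :: "'i set \<Rightarrow> ('i \<Rightarrow> 'i \<Rightarrow> 'a::comm_ring_1) \<Rightarrow> 'a" where
  "det_on U M = (\<Sum>\<sigma> | \<sigma> permutes U. of_int (sign \<sigma>) * (\<Prod>x\<in>U. M x (\<sigma> x)))"

lemma det_on_empty [simp]: "det_on {} M = 1"
  by (simp add: det_on_def)

(* The sum is the determinant of M with row i replaced by row l. *)
lemma det_on_repeated_row:
  fixes M :: "'i \<Rightarrow> 'i \<Rightarrow> 'a::{idom,semiring_char_0}"
  assumes fin: "finite U" and l: "l \<in> U" and i: "i \<in> U" and "i \<noteq> l"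
  shows "(\<Sum>\<sigma> | \<sigma> permutes U. of_int (sign \<sigma>) * M l (\<sigma> i) * (\<Prod>x\<in>U-{i}. M x (\<sigma> x))) = 0"
proof -
  let ?t = "transpose i l"
  define f where "f \<sigma> = of_int (sign \<sigma>) * M l (\<sigma> i) * (\<Prod>x\<in>U-{i}. M x (\<sigma> x))" for \<sigma>
  have t: "?t permutes U" using i l by (simp add: permutes_swap_id)
  have lU: "l \<in> U - {i}" using l \<open>i \<noteq> l\<close> by simp
  have "f (\<sigma> \<circ> ?t) = - f \<sigma>" if \<sigma>: "\<sigma> permutes U" for \<sigma>
  proof -
    have "sign (\<sigma> \<circ> ?t) = - sign \<sigma>"
      using sign_compose[OF permutes_imp_permutation[OF fin \<sigma>] permutes_imp_permutation[OF fin t]]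
        sign_swap_id[of i l] \<open>i \<noteq> l\<close> by simp
    moreover have "(\<Prod>x\<in>U-{i}. M x (\<sigma> x)) = M l (\<sigma> l) * (\<Prod>x\<in>U-{i}-{l}. M x (\<sigma> x))"
      "(\<Prod>x\<in>U-{i}. M x ((\<sigma> \<circ> ?t) x)) = M l (\<sigma> i) * (\<Prod>x\<in>U-{i}-{l}. M x ((\<sigma> \<circ> ?t) x))"
      using prod.remove[OF _ lU, of "\<lambda>x. M x (\<sigma> x)"] prod.remove[OF _ lU, of "\<lambda>x. M x ((\<sigma> \<circ> ?t) x)"] fin
      by simp_all
    moreover have "(\<Prod>x\<in>U-{i}-{l}. M x ((\<sigma> \<circ> ?t) x)) = (\<Prod>x\<in>U-{i}-{l}. M x (\<sigma> x))"
      by (rule prod.cong) (auto simp: transpose_def)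
    ultimately show ?thesis by (simp add: f_def transpose_def)
  qed
  then have "sum f {\<sigma>. \<sigma> permutes U} = - sum f {\<sigma>. \<sigma> permutes U}"
    using sum_permutations_compose_right[OF t, of f] by (simp add: sum_negf)
  then show ?thesis unfolding f_def by (simp add: eq_neg_iff_add_eq_0 flip: mult_2)
qed

(* adj_vec U M b is adj M applied to b: the cofactor of the entry (i, l) of M collects
   the permutations with sigma i = l. *)
definition adj_vec :: "'i set \<Rightarrow> ('i \<Rightarrow> 'i \<Rightarrow> 'a::comm_ring_1) \<Rightarrow> ('i \<Rightarrow> 'a) \<Rightarrow> 'i \<Rightarrow> 'a" where
  "adj_vec U M b l = (\<Sum>\<sigma> | \<sigma> permutes U. \<Sum>i\<in>U.
     if \<sigma> i = l then of_int (sign \<sigma>) * b i * (\<Prod>x\<in>U-{i}. M x (\<sigma> x)) else 0)"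

lemma det_on_mult_adj_vec:
  fixes M :: "'i \<Rightarrow> 'i \<Rightarrow> 'a::{idom,semiring_char_0}"
  assumes fin: "finite U" and l: "l \<in> U"
  shows "(\<Sum>l'\<in>U. M l l' * adj_vec U M b l') = det_on U M * b l"
proof -
  define R where "R i = (\<Sum>\<sigma> | \<sigma> permutes U. of_int (sign \<sigma>) * M l (\<sigma> i) * (\<Prod>x\<in>U-{i}. M x (\<sigma> x)))" for i
  have "(\<Sum>l'\<in>U. M l l' * adj_vec U M b l') =
      (\<Sum>l'\<in>U. \<Sum>\<sigma> | \<sigma> permutes U. \<Sum>i\<in>U. M l l' *
        (if \<sigma> i = l' then of_int (sign \<sigma>) * b i * (\<Prod>x\<in>U-{i}. M x (\<sigma> x)) else 0))"
    by (simp only: adj_vec_def sum_distrib_left)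
  also have "\<dots> = (\<Sum>\<sigma> | \<sigma> permutes U. \<Sum>i\<in>U. \<Sum>l'\<in>U. M l l' *
        (if \<sigma> i = l' then of_int (sign \<sigma>) * b i * (\<Prod>x\<in>U-{i}. M x (\<sigma> x)) else 0))"
    by (subst sum.swap) (rule sum.cong[OF refl], rule sum.swap)
  also have "\<dots> = (\<Sum>\<sigma> | \<sigma> permutes U. \<Sum>i\<in>U.
      b i * (of_int (sign \<sigma>) * M l (\<sigma> i) * (\<Prod>x\<in>U-{i}. M x (\<sigma> x))))"
  proof (intro sum.cong refl)
    fix \<sigma> i assume "\<sigma> \<in> {\<sigma>. \<sigma> permutes U}" "i \<in> U"
    then have "\<sigma> i \<in> U" by (simp add: permutes_in_image)
    then have "(\<Sum>l'\<in>U. M l l' * (if \<sigma> i = l' then c else 0)) = M l (\<sigma> i) * c" for c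
      using sum.delta'[OF fin, of "\<sigma> i" "\<lambda>_. M l (\<sigma> i) * c"] by (simp add: if_distrib[of "(*) _"] cong: if_cong)
    then show "(\<Sum>l'\<in>U. M l l' * (if \<sigma> i = l' then of_int (sign \<sigma>) * b i * (\<Prod>x\<in>U-{i}. M x (\<sigma> x)) else 0)) =
        b i * (of_int (sign \<sigma>) * M l (\<sigma> i) * (\<Prod>x\<in>U-{i}. M x (\<sigma> x)))"
      by (simp add: mult_ac)
  qed
  also have "\<dots> = (\<Sum>i\<in>U. b i * R i)"
    unfolding R_def sum_distrib_left by (rule sum.swap)
  also have "\<dots> = b l * R l"
    using det_on_repeated_row[OF fin l, of _ M] by (simp add: sum.remove[OF fin l] R_def)
  also have "R l = det_on U M"
    unfolding R_def det_on_def by (intro sum.cong refl) (simp add: prod.remove[OF fin l] mult.assoc)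
  finally show ?thesis by (simp add: mult.commute)
qed

section \<open>The matrix I + X A' and its Schur complements\<close>

fun mat_pow_apply :: "'i set \<Rightarrow> ('i \<Rightarrow> 'i \<Rightarrow> 'a::comm_semiring_0) \<Rightarrow> ('i \<Rightarrow> 'a) \<Rightarrow> nat \<Rightarrow> 'i \<Rightarrow> 'a" where
  "mat_pow_apply U B b 0 l = b l"
| "mat_pow_apply U B b (Suc p) l = (\<Sum>l'\<in>U. B l l' * mat_pow_apply U B b p l')"

lemma fps_eq_zero_if_id_plus_X_mult_zero:
  fixes Z :: "'i \<Rightarrow> 'a::comm_ring_1 fps"
  assumes Z: "\<And>l. l \<in> U \<Longrightarrow> Z l + fps_X * (\<Sum>l'\<in>U. fps_const (B l l') * Z l') = 0"
    and "l \<in> U"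
  shows "Z l = 0"
proof -
  have "\<forall>l\<in>U. fps_nth (Z l) m = 0" for m
  proof (induction m rule: less_induct)
    case (less m)
    show ?case
    proof
      fix l assume l: "l \<in> U"
      have "fps_nth (Z l + fps_X * (\<Sum>l'\<in>U. fps_const (B l l') * Z l')) m = 0"
        using Z[OF l] by simp
      moreover have "0 < m \<Longrightarrow> fps_nth (\<Sum>l'\<in>U. fps_const (B l l') * Z l') (m - 1) = 0"
        using less by (simp add: fps_sum_nth)
      ultimately show "fps_nth (Z l) m = 0" by (cases "m = 0") auto
    qed
  qed
  then show ?thesis using \<open>l \<in> U\<close> by (intro fps_ext) simp
qed

definition neumann_series :: "'i set \<Rightarrow> ('i \<Rightarrow> 'i \<Rightarrow> 'a::comm_ring_1) \<Rightarrow> ('i \<Rightarrow> 'a) \<Rightarrow> 'i \<Rightarrow> 'a fps" where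
  "neumann_series U B b l = Abs_fps (\<lambda>p. (-1)^p * mat_pow_apply U B b p l)"

lemma neumann_series_solves:
  "neumann_series U B b l + fps_X * (\<Sum>l'\<in>U. fps_const (B l l') * neumann_series U B b l') = fps_const (b l)"
proof (rule fps_ext)
  fix m show "fps_nth (neumann_series U B b l + fps_X * (\<Sum>l'\<in>U. fps_const (B l l') * neumann_series U B b l')) m =
      fps_nth (fps_const (b l)) m"
    by (cases m) (simp_all add: neumann_series_def fps_sum_nth sum_distrib_left mult_ac sum_negf)
qed

definition gf_matrix :: "('i \<Rightarrow> 'i \<Rightarrow> int) \<Rightarrow> 'i \<Rightarrow> 'i \<Rightarrow> int fps" where
  "gf_matrix A x y = (if x = y then 1 else fps_const (A x y) * fps_X)"

definition offdiag :: "('i \<Rightarrow> 'i \<Rightarrow> int) \<Rightarrow> 'i \<Rightarrow> 'i \<Rightarrow> int" where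
  "offdiag A x y = (if x = y then 0 else A x y)"

lemma gf_matrix_eq: "gf_matrix A x y = (if x = y then 1 else 0) + fps_X * fps_const (offdiag A x y)"
  by (simp add: gf_matrix_def offdiag_def mult.commute)

lemma adj_vec_gf_matrix:
  assumes fin: "finite U" and l: "l \<in> U"
  shows "adj_vec U (gf_matrix A) (\<lambda>i. fps_const (b i)) l =
    det_on U (gf_matrix A) * neumann_series U (offdiag A) b l"
proof -
  define D where "D = det_on U (gf_matrix A)"
  define L where "L l = adj_vec U (gf_matrix A) (\<lambda>i. fps_const (b i)) l" for l
  define H where "H = neumann_series U (offdiag A) b"
  have L: "L l + fps_X * (\<Sum>l'\<in>U. fps_const (offdiag A l l') * L l') = D * fps_const (b l)"
    if l: "l \<in> U" for l
  proof -
    have "(\<Sum>l'\<in>U. gf_matrix A l l' * L l') = L l + fps_X * (\<Sum>l'\<in>U. fps_const (offdiag A l l') * L l')"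
      unfolding gf_matrix_eq distrib_right sum.distrib
      by (simp add: sum_distrib_left if_distrib[of "\<lambda>x. x * _"] fin l mult.assoc cong: if_cong)
    then show ?thesis
      using det_on_mult_adj_vec[OF fin l, of "gf_matrix A" "\<lambda>i. fps_const (b i)"] by (simp add: L_def D_def)
  qed
  have H: "H l + fps_X * (\<Sum>l'\<in>U. fps_const (offdiag A l l') * H l') = fps_const (b l)" for l
    unfolding H_def by (rule neumann_series_solves)
  have "L l - D * H l = 0"
  proof (rule fps_eq_zero_if_id_plus_X_mult_zero[OF _ l])
    fix l assume "l \<in> U"
    have "L l - D * H l + fps_X * (\<Sum>l'\<in>U. fps_const (offdiag A l l') * (L l' - D * H l')) =
        (L l + fps_X * (\<Sum>l'\<in>U. fps_const (offdiag A l l') * L l'))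
        - D * (H l + fps_X * (\<Sum>l'\<in>U. fps_const (offdiag A l l') * H l'))"
      by (simp add: algebra_simps sum_subtractf sum_distrib_left)
    then show "L l - D * H l + fps_X * (\<Sum>l'\<in>U. fps_const (offdiag A l l') * (L l' - D * H l')) = 0"
      using L[OF \<open>l \<in> U\<close>] H[of l] by simp
  qed
  then show ?thesis by (simp add: L_def D_def H_def)
qed

lemma gf_matrix_transpose_term:
  assumes fin: "finite U" and h: "h \<notin> U" and j: "j \<in> U" and q: "q permutes U"
  shows "of_int (sign (transpose h j \<circ> q)) * (\<Prod>x\<in>insert h U. gf_matrix A x ((transpose h j \<circ> q) x)) =
    - (fps_X^2) * fps_const (A h j) * (\<Sum>i\<in>U. if q i = j
        then of_int (sign q) * fps_const (A i h) * (\<Prod>x\<in>U-{i}. gf_matrix A x (q x)) else 0)"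
proof -
  define i0 where "i0 = inv q j"
  have i0U: "i0 \<in> U" unfolding i0_def using q j by (simp add: permutes_in_image permutes_inv)
  have q_eq_j: "i \<in> U \<Longrightarrow> q i = j \<longleftrightarrow> i = i0" for i
    unfolding i0_def using q by (metis permutes_inverses)
  have "h \<noteq> j" "i0 \<noteq> h" using h j i0U by auto
  have "(\<Sum>i\<in>U. if q i = j then of_int (sign q) * fps_const (A i h) * (\<Prod>x\<in>U-{i}. gf_matrix A x (q x)) else 0)
      = of_int (sign q) * fps_const (A i0 h) * (\<Prod>x\<in>U-{i0}. gf_matrix A x (q x))"
    using i0U by (simp add: q_eq_j sum.delta[OF fin] cong: if_cong)
  moreover have "sign (transpose h j \<circ> q) = - sign q"
    using sign_compose[OF permutation_swap_id permutes_imp_permutation[OF fin q]] sign_swap_id[of h j] \<open>h \<noteq> j\<close>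
    by simp
  moreover have "(\<Prod>x\<in>insert h U. gf_matrix A x ((transpose h j \<circ> q) x)) =
      gf_matrix A h j * (gf_matrix A i0 h * (\<Prod>x\<in>U-{i0}. gf_matrix A x (q x)))"
  proof -
    have "(\<Prod>x\<in>U-{i0}. gf_matrix A x (transpose h j (q x))) = (\<Prod>x\<in>U-{i0}. gf_matrix A x (q x))"
    proof (rule prod.cong[OF refl])
      fix x assume x: "x \<in> U - {i0}"
      then have "q x \<noteq> j" "q x \<noteq> h" using q_eq_j h q by (auto simp: permutes_in_image)
      then show "gf_matrix A x (transpose h j (q x)) = gf_matrix A x (q x)" by simp
    qed
    moreover have "q h = h" "q i0 = j" using q h by (auto simp: permutes_not_in q_eq_j i0U)
    ultimately show ?thesis
      using fin h prod.remove[OF fin i0U, of "\<lambda>x. gf_matrix A x (transpose h j (q x))"] by simp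
  qed
  ultimately show ?thesis using \<open>h \<noteq> j\<close> \<open>i0 \<noteq> h\<close>
    by (simp add: gf_matrix_def power2_eq_square mult_ac)
qed

lemma det_on_gf_matrix_insert:
  assumes fin: "finite U" and h: "h \<notin> U"
  shows "det_on (insert h U) (gf_matrix A) = det_on U (gf_matrix A) -
    fps_X^2 * (\<Sum>j\<in>U. fps_const (A h j) * adj_vec U (gf_matrix A) (\<lambda>i. fps_const (A i h)) j)"
proof -
  define f where "f \<sigma> = of_int (sign \<sigma>) * (\<Prod>x\<in>insert h U. gf_matrix A x (\<sigma> x))" for \<sigma>
  have "(\<Sum>q | q permutes U. f (transpose h h \<circ> q)) = det_on U (gf_matrix A)"
    unfolding det_on_def f_def
    using fin h by (intro sum.cong refl) (simp add: permutes_not_in gf_matrix_def)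
  moreover have "(\<Sum>q | q permutes U. f (transpose h j \<circ> q)) =
      - (fps_X^2) * (fps_const (A h j) * adj_vec U (gf_matrix A) (\<lambda>i. fps_const (A i h)) j)" if "j \<in> U" for j
  proof -
    have "(\<Sum>q | q permutes U. f (transpose h j \<circ> q)) = (\<Sum>q | q permutes U. - (fps_X^2) * fps_const (A h j) *
        (\<Sum>i\<in>U. if q i = j then of_int (sign q) * fps_const (A i h) * (\<Prod>x\<in>U-{i}. gf_matrix A x (q x)) else 0))"
      unfolding f_def by (intro sum.cong refl, rule gf_matrix_transpose_term[OF fin h \<open>j \<in> U\<close>]) simp
    then show ?thesis by (simp add: adj_vec_def sum_distrib_left mult.assoc)
  qed
  moreover have "det_on (insert h U) (gf_matrix A) =
      (\<Sum>j\<in>insert h U. \<Sum>q | q permutes U. f (transpose h j \<circ> q))"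
    unfolding det_on_def f_def[symmetric] by (rule sum_over_permutations_insert[OF fin h])
  ultimately show ?thesis
    using fin h by (simp add: sum_distrib_left sum_negf)
qed

definition excursion_gf :: "'i set \<Rightarrow> ('i \<Rightarrow> 'i \<Rightarrow> int) \<Rightarrow> 'i \<Rightarrow> int fps" where
  "excursion_gf U A h = fps_X^2 * (\<Sum>j\<in>U. fps_const (A h j) * neumann_series U (offdiag A) (\<lambda>i. A i h) j)"

lemma det_on_gf_matrix_insert_factor:
  assumes "finite U" and "h \<notin> U"
  shows "det_on (insert h U) (gf_matrix A) = det_on U (gf_matrix A) * (1 - excursion_gf U A h)"
  using assms
  by (simp add: det_on_gf_matrix_insert adj_vec_gf_matrix excursion_gf_def algebra_simps sum_distrib_left)

fun walk_weight :: "('i \<Rightarrow> 'i \<Rightarrow> 'a::comm_monoid_mult) \<Rightarrow> 'i list \<Rightarrow> 'a" where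
  "walk_weight B (x # y # ys) = B x y * walk_weight B (y # ys)"
| "walk_weight B _ = 1"

lemma walk_edges_simps [simp]:
  "walk_edges [] = []" "walk_edges [x] = []" "walk_edges (x # y # ys) = (x, y) # walk_edges (y # ys)"
  by (simp_all add: walk_edges_def)

lemma prod_list_walk_edges: "prod_list (map (\<lambda>(a, b). B a b) (walk_edges xs)) = walk_weight B xs"
  by (induction B xs rule: walk_weight.induct) auto

lemma walk_edges_all_iff_successively: "(\<forall>(a, b) \<in> set (walk_edges xs). P a b) \<longleftrightarrow> successively P xs"
  by (induction xs rule: induct_list012) auto

lemma walk_weight_neq_zero_iff:
  fixes B :: "'i \<Rightarrow> 'i \<Rightarrow> 'a::{comm_semiring_1,semiring_no_zero_divisors}"
  shows "walk_weight B xs \<noteq> 0 \<longleftrightarrow> successively (\<lambda>a b. B a b \<noteq> 0) xs"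
  by (induction B xs rule: walk_weight.induct) auto

lemma walk_weight_cong: "successively (\<lambda>a b. B a b = B' a b) xs \<Longrightarrow> walk_weight B xs = walk_weight B' xs"
  by (induction B xs rule: walk_weight.induct) auto

lemma walk_weight_snoc: "walk_weight B (xs @ [y]) = (if xs = [] then 1 else walk_weight B xs * B (last xs) y)"
  by (induction B xs rule: walk_weight.induct) (auto simp: mult.assoc)

lemma successively_conj_iff:
  "successively (\<lambda>a b. P a b \<and> Q a b) xs \<longleftrightarrow> successively P xs \<and> successively Q xs"
  by (induction xs rule: induct_list012) auto

lemma sum_lists_length_Suc:
  assumes "finite U"
  shows "(\<Sum>vs | set vs \<subseteq> U \<and> length vs = Suc p. g vs) =
    (\<Sum>x\<in>U. \<Sum>vs | set vs \<subseteq> U \<and> length vs = p. g (x # vs))"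
proof -
  have "{vs. set vs \<subseteq> U \<and> length vs = Suc p} = case_prod (#) ` (U \<times> {vs. set vs \<subseteq> U \<and> length vs = p})"
    by (auto simp: length_Suc_conv image_iff)
  moreover have "inj_on (case_prod (#)) (U \<times> {vs. set vs \<subseteq> U \<and> length vs = p})"
    by (auto simp: inj_on_def)
  ultimately show ?thesis
    by (simp add: sum.reindex sum.cartesian_product split_def)
qed

lemma mat_pow_apply_eq_sum_walks:
  fixes B :: "'i \<Rightarrow> 'i \<Rightarrow> 'a::comm_semiring_1"
  assumes "finite U"
  shows "mat_pow_apply U B b p l =
    (\<Sum>vs | set vs \<subseteq> U \<and> length vs = p. walk_weight B (l # vs) * b (last (l # vs)))"
proof (induction p arbitrary: l)
  case 0
  have "{vs. set vs \<subseteq> U \<and> length vs = 0} = {[]}" by auto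
  then show ?case by simp
next
  case (Suc p)
  show ?case
    unfolding sum_lists_length_Suc[OF assms] mat_pow_apply.simps Suc
    by (simp add: sum_distrib_left mult.assoc)
qed

section \<open>Clows with a fixed head\<close>

lemma offdiag_neq_zero_iff: "offdiag A a b \<noteq> 0 \<longleftrightarrow> a \<noteq> b \<and> is_edge A a b"
  by (auto simp: offdiag_def is_edge_def)

lemma walk_weight_offdiag_neq_zero_iff:
  "walk_weight (offdiag A) C \<noteq> 0 \<longleftrightarrow> successively (\<noteq>) C \<and> successively (is_edge A) C"
  by (simp add: walk_weight_neq_zero_iff offdiag_neq_zero_iff successively_conj_iff)

lemma walk_weight_offdiag:
  assumes "walk_weight (offdiag A) C \<noteq> 0"
  shows "walk_weight A C = walk_weight (offdiag A) C"
proof -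
  from assms have "successively (\<lambda>a b. offdiag A a b \<noteq> 0) C" using walk_weight_neq_zero_iff by blast
  then have "successively (\<lambda>a b. A a b = offdiag A a b) C"
    by (rule successively_mono) (auto simp: offdiag_def split: if_splits)
  then show ?thesis by (rule walk_weight_cong)
qed

definition proper_clow :: "nat \<Rightarrow> (nat \<Rightarrow> nat \<Rightarrow> int) \<Rightarrow> nat list \<Rightarrow> bool" where
  "proper_clow n A C \<longleftrightarrow> is_clow n A C \<and> num_edges C \<ge> 2 \<and> (\<forall>(a, b) \<in> set (walk_edges C). a \<noteq> b)"

definition clows_at :: "nat \<Rightarrow> (nat \<Rightarrow> nat \<Rightarrow> int) \<Rightarrow> nat \<Rightarrow> nat \<Rightarrow> nat list set" where
  "clows_at n A h m = {C. proper_clow n A C \<and> head C = h \<and> num_edges C = m}"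

lemma num_edges_eq: "num_edges C = length C - 1"
  by (simp add: num_edges_def walk_edges_def)

lemma proper_clow_length: "proper_clow n A C \<Longrightarrow> length C = Suc (num_edges C) \<and> set C \<subseteq> {1..n}"
  by (auto simp: proper_clow_def is_clow_def is_walk_def num_edges_eq)

lemma head_proper_clow: "proper_clow n A C \<Longrightarrow> head C \<in> {1..n}"
  by (cases C) (auto simp: proper_clow_def is_clow_def is_walk_def head_def)

lemma finite_clows_at: "finite (clows_at n A h m)"
proof (rule finite_subset)
  show "clows_at n A h m \<subseteq> {C. set C \<subseteq> {1..n} \<and> length C \<le> Suc m}"
    using proper_clow_length by (auto simp: clows_at_def)
qed (rule finite_lists_length_le, simp)

lemma is_clow_cons_snoc_iff:
  "is_clow n A (h # us @ [h]) \<longleftrightarrow>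
    set (h # us) \<subseteq> {1..n} \<and> successively (is_edge A) (h # us @ [h]) \<and> (\<forall>u\<in>set us. h < u)"
proof -
  have "(\<forall>j. 0 < j \<and> j < length (h # us @ [h]) - 1 \<longrightarrow> (h # us @ [h]) ! j \<noteq> h) \<longleftrightarrow> h \<notin> set us"
    by (auto simp: in_set_conv_nth nth_append gr0_conv_Suc)
  moreover have "h = Min (set (butlast (h # us @ [h]))) \<longleftrightarrow> (\<forall>u\<in>set us. h \<le> u)"
    by (simp add: butlast_append eq_Min_iff)
  ultimately show ?thesis
    by (auto simp: is_clow_def is_walk_def walk_edges_all_iff_successively order.order_iff_strict)
qed

lemma clows_at_iff:
  assumes "1 \<le> h" "h \<le> n" "2 \<le> m"
  shows "C \<in> clows_at n A h m \<longleftrightarrow>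
    (\<exists>us. C = h # us @ [h] \<and> set us \<subseteq> {Suc h..n} \<and> length us = m - 1 \<and> walk_weight (offdiag A) C \<noteq> 0)"
proof
  assume C: "C \<in> clows_at n A h m"
  then have "is_clow n A C" "hd C = h" "length C = Suc m"
    using \<open>2 \<le> m\<close> by (auto simp: clows_at_def proper_clow_def head_def num_edges_eq)
  moreover from this have "tl C \<noteq> []"
    using \<open>2 \<le> m\<close> by (cases C) auto
  ultimately have "C = h # butlast (tl C) @ [h]"
    by (metis append_butlast_last_id hd_Cons_tl is_clow_def last_tl list.sel(2))
  moreover have "walk_weight (offdiag A) C \<noteq> 0"
    using C by (auto simp: clows_at_def proper_clow_def is_clow_def is_walk_def
      walk_weight_offdiag_neq_zero_iff walk_edges_all_iff_successively)
  ultimately show "\<exists>us. C = h # us @ [h] \<and> set us \<subseteq> {Suc h..n} \<and> length us = m - 1 \<and> walk_weight (offdiag A) C \<noteq> 0"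
    using \<open>is_clow n A C\<close> \<open>length C = Suc m\<close> is_clow_cons_snoc_iff[of n A h "butlast (tl C)"]
    by (intro exI[of _ "butlast (tl C)"]) (auto simp flip: Suc_le_eq)
next
  assume "\<exists>us. C = h # us @ [h] \<and> set us \<subseteq> {Suc h..n} \<and> length us = m - 1 \<and> walk_weight (offdiag A) C \<noteq> 0"
  then obtain us where C: "C = h # us @ [h]" "set us \<subseteq> {Suc h..n}" "length us = m - 1"
    and "walk_weight (offdiag A) C \<noteq> 0" by blast
  then have "successively (\<noteq>) C" "successively (is_edge A) C"
    by (simp_all add: walk_weight_offdiag_neq_zero_iff)
  then show "C \<in> clows_at n A h m"
    using C assms
    by (auto simp: clows_at_def proper_clow_def head_def num_edges_eq is_clow_cons_snoc_iff
      walk_edges_all_iff_successively)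
qed

lemma sum_clows_at:
  assumes h: "1 \<le> h" "h \<le> n" and m: "2 \<le> m"
  shows "(\<Sum>C\<in>clows_at n A h m. walk_weight A C) =
    (\<Sum>j\<in>{Suc h..n}. A h j * mat_pow_apply {Suc h..n} (offdiag A) (\<lambda>i. A i h) (m - 2) j)"
proof -
  define U where "U = {Suc h..n}"
  define L where "L p = {vs. set vs \<subseteq> U \<and> length vs = p}" for p
  have "finite U" by (simp add: U_def)
  then have "finite (L p)" for p unfolding L_def by (rule finite_lists_length_eq)
  have "(\<Sum>j\<in>U. A h j * mat_pow_apply U (offdiag A) (\<lambda>i. A i h) (m - 2) j) =
      (\<Sum>j\<in>U. \<Sum>vs\<in>L (m - 2). walk_weight (offdiag A) (h # (j # vs) @ [h]))"
  proof (intro sum.cong refl)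
    fix j assume j: "j \<in> U"
    have "A h j * (walk_weight (offdiag A) (j # vs) * A (last (j # vs)) h) =
        walk_weight (offdiag A) (h # (j # vs) @ [h])" if "vs \<in> L (m - 2)" for vs
    proof -
      have "last (j # vs) \<in> U" using that j by (auto simp: L_def)
      then show ?thesis
        using j walk_weight_snoc[of "offdiag A" "j # vs" h] by (simp add: offdiag_def U_def)
    qed
    then show "A h j * mat_pow_apply U (offdiag A) (\<lambda>i. A i h) (m - 2) j =
        (\<Sum>vs\<in>L (m - 2). walk_weight (offdiag A) (h # (j # vs) @ [h]))"
      unfolding mat_pow_apply_eq_sum_walks[OF \<open>finite U\<close>] sum_distrib_left L_def by simp
  qed
  also have "\<dots> = (\<Sum>us\<in>L (m - 1). walk_weight (offdiag A) (h # us @ [h]))"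
    using m sum_lists_length_Suc[OF \<open>finite U\<close>, where p = "m - 2" and g = "\<lambda>us. walk_weight (offdiag A) (h # us @ [h])"]
    by (simp add: L_def Suc_diff_Suc numeral_2_eq_2)
  also have "\<dots> = (\<Sum>us | us \<in> L (m - 1) \<and> walk_weight (offdiag A) (h # us @ [h]) \<noteq> 0.
      walk_weight (offdiag A) (h # us @ [h]))"
    using \<open>finite (L (m - 1))\<close> by (intro sum.mono_neutral_right) auto
  also have "\<dots> = (\<Sum>C\<in>clows_at n A h m. walk_weight A C)"
    by (rule sum.reindex_bij_witness[of _ "\<lambda>C. butlast (tl C)" "\<lambda>us. h # us @ [h]"])
      (auto simp: clows_at_iff[OF h m] L_def U_def walk_weight_offdiag)
  finally show ?thesis by (simp add: U_def)
qed

lemma excursion_gf_nth: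
  assumes h: "1 \<le> h" "h \<le> n"
  shows "fps_nth (excursion_gf {Suc h..n} A h) m = (-1)^m * (\<Sum>C\<in>clows_at n A h m. walk_weight A C)"
proof (cases "m < 2")
  case True
  then have "clows_at n A h m = {}" by (auto simp: clows_at_def proper_clow_def)
  then show ?thesis using True by (simp add: excursion_gf_def fps_X_power_mult_nth)
next
  case False
  then obtain p where "m = p + 2" by (metis add.commute le_Suc_ex not_less)
  then show ?thesis
    using sum_clows_at[OF h, of m A]
    by (simp add: excursion_gf_def fps_X_power_mult_nth fps_sum_nth neumann_series_def
      sum_distrib_left mult_ac)
qed

section \<open>Clow sequences with heads bounded below\<close>

lemma clow_seqs_eq:
  "clow_seqs n A k =
    {W. (\<forall>C\<in>set W. proper_clow n A C) \<and> sorted_wrt (<) (map head W) \<and> sum_list (map num_edges W) = k}"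
  by (simp add: clow_seqs_def proper_clow_def)

lemma finite_clow_seqs: "finite (clow_seqs n A k)"
proof (rule finite_subset)
  let ?X = "{C. set C \<subseteq> {1..n} \<and> length C \<le> Suc k}"
  show "clow_seqs n A k \<subseteq> {W. set W \<subseteq> ?X \<and> length W \<le> k}"
  proof
    fix W assume W: "W \<in> clow_seqs n A k"
    then have proper: "\<forall>C\<in>set W. proper_clow n A C" and k: "sum_list (map num_edges W) = k"
      by (auto simp: clow_seqs_eq)
    have "set W \<subseteq> ?X"
      using proper proper_clow_length[of n A] k member_le_sum_list[of _ "map num_edges W"] by fastforce
    moreover have "length W \<le> sum_list (map num_edges W)"
      using proper by (induction W) (auto simp: proper_clow_def)
    ultimately show "W \<in> {W. set W \<subseteq> ?X \<and> length W \<le> k}" using k by simp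
  qed
  show "finite {W. set W \<subseteq> ?X \<and> length W \<le> k}"
    by (intro finite_lists_length_le finite_lists_length_le) simp
qed

definition clow_seqs_from :: "nat \<Rightarrow> (nat \<Rightarrow> nat \<Rightarrow> int) \<Rightarrow> nat \<Rightarrow> nat \<Rightarrow> nat list list set" where
  "clow_seqs_from n A h k = {W \<in> clow_seqs n A k. \<forall>C\<in>set W. h \<le> head C}"

lemma finite_clow_seqs_from: "finite (clow_seqs_from n A h k)"
  unfolding clow_seqs_from_def using finite_clow_seqs by simp

lemma clow_seqs_from_1: "clow_seqs_from n A 1 k = clow_seqs n A k"
  unfolding clow_seqs_from_def using head_proper_clow by (fastforce simp: clow_seqs_eq)

lemma clow_seqs_from_Suc_n: "clow_seqs_from n A (Suc n) k = (if k = 0 then {[]} else {})"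
proof -
  have "W \<in> clow_seqs_from n A (Suc n) k \<longleftrightarrow> W = [] \<and> k = 0" for W
    by (cases W) (auto simp: clow_seqs_from_def clow_seqs_eq dest!: head_proper_clow)
  then show ?thesis by auto
qed

lemma clow_seqs_from_Cons_iff:
  "C # W \<in> clow_seqs_from n A h k \<longleftrightarrow>
    proper_clow n A C \<and> h \<le> head C \<and> num_edges C \<le> k \<and> (\<forall>D\<in>set W. head C < head D) \<and>
    W \<in> clow_seqs_from n A h (k - num_edges C)"
  by (auto simp: clow_seqs_from_def clow_seqs_eq)

lemma clow_seqs_from_diff_iff:
  "W \<in> clow_seqs_from n A h k - clow_seqs_from n A (Suc h) k \<longleftrightarrow>
    (\<exists>C W'. W = C # W' \<and> num_edges C \<le> k \<and> C \<in> clows_at n A h (num_edges C) \<and>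
       W' \<in> clow_seqs_from n A (Suc h) (k - num_edges C))"
proof
  assume W: "W \<in> clow_seqs_from n A h k - clow_seqs_from n A (Suc h) k"
  then obtain C W' where W_eq: "W = C # W'"
    by (cases W) (auto simp: clow_seqs_from_def)
  then have C: "proper_clow n A C" "h \<le> head C" "num_edges C \<le> k" "\<forall>D\<in>set W'. head C < head D"
    and W': "W' \<in> clow_seqs_from n A h (k - num_edges C)"
    using W by (simp_all add: clow_seqs_from_Cons_iff)
  have "head C = h"
    using W W_eq C(2,4) by (force simp: clow_seqs_from_Cons_iff clow_seqs_from_def)
  then show "\<exists>C W'. W = C # W' \<and> num_edges C \<le> k \<and> C \<in> clows_at n A h (num_edges C) \<and>
      W' \<in> clow_seqs_from n A (Suc h) (k - num_edges C)"
    using W_eq C W' by (auto simp: clows_at_def clow_seqs_from_def Suc_le_eq)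
next
  assume "\<exists>C W'. W = C # W' \<and> num_edges C \<le> k \<and> C \<in> clows_at n A h (num_edges C) \<and>
      W' \<in> clow_seqs_from n A (Suc h) (k - num_edges C)"
  then obtain C W' where "W = C # W'" "num_edges C \<le> k" "proper_clow n A C" "head C = h"
    "W' \<in> clow_seqs_from n A (Suc h) (k - num_edges C)" by (auto simp: clows_at_def)
  moreover from this have "W' \<in> clow_seqs_from n A h (k - num_edges C)" "\<forall>D\<in>set W'. h < head D"
    by (auto simp: clow_seqs_from_def)
  ultimately show "W \<in> clow_seqs_from n A h k - clow_seqs_from n A (Suc h) k"
    by (simp add: clow_seqs_from_Cons_iff)
qed

lemma sum_clow_seqs_from_diff:
  "(\<Sum>W\<in>clow_seqs_from n A h k - clow_seqs_from n A (Suc h) k. f W) =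
    (\<Sum>m\<le>k. \<Sum>C\<in>clows_at n A h m. \<Sum>W'\<in>clow_seqs_from n A (Suc h) (k - m). f (C # W'))"
proof -
  let ?S = "Sigma {..k} (\<lambda>m. clows_at n A h m \<times> clow_seqs_from n A (Suc h) (k - m))"
  have "(\<Sum>W\<in>clow_seqs_from n A h k - clow_seqs_from n A (Suc h) k. f W) =
      (\<Sum>(m, C, W')\<in>?S. f (C # W'))"
  proof (rule sum.reindex_bij_witness[of _ "\<lambda>(m, C, W'). C # W'" "\<lambda>W. (num_edges (hd W), hd W, tl W)"])
    fix W assume "W \<in> clow_seqs_from n A h k - clow_seqs_from n A (Suc h) k"
    then obtain C W' where "W = C # W'" "num_edges C \<le> k" "C \<in> clows_at n A h (num_edges C)"
      "W' \<in> clow_seqs_from n A (Suc h) (k - num_edges C)"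
      unfolding clow_seqs_from_diff_iff by blast
    then show "(num_edges (hd W), hd W, tl W) \<in> ?S" "(case (num_edges (hd W), hd W, tl W) of (m, C, W') \<Rightarrow> C # W') = W"
      "(case (num_edges (hd W), hd W, tl W) of (m, C, W') \<Rightarrow> f (C # W')) = f W"
      by auto
  next
    fix x assume "x \<in> ?S"
    then obtain m C W' where "x = (m, C, W')" "m \<le> k" "C \<in> clows_at n A h m"
      "W' \<in> clow_seqs_from n A (Suc h) (k - m)" by auto
    moreover have "num_edges C = m" using \<open>C \<in> clows_at n A h m\<close> by (simp add: clows_at_def)
    ultimately show "(case x of (m, C, W') \<Rightarrow> C # W') \<in> clow_seqs_from n A h k - clow_seqs_from n A (Suc h) k"
      "(num_edges (hd (case x of (m, C, W') \<Rightarrow> C # W')), hd (case x of (m, C, W') \<Rightarrow> C # W'),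
        tl (case x of (m, C, W') \<Rightarrow> C # W')) = x"
      using clow_seqs_from_diff_iff[of "C # W'" n A h k] by auto
  qed
  also have "\<dots> = (\<Sum>m\<le>k. \<Sum>(C, W')\<in>clows_at n A h m \<times> clow_seqs_from n A (Suc h) (k - m). f (C # W'))"
    by (subst sum.Sigma) (simp_all add: finite_clows_at finite_clow_seqs_from)
  finally show ?thesis by (simp add: sum.cartesian_product)
qed

definition clow_seq_sum :: "nat \<Rightarrow> (nat \<Rightarrow> nat \<Rightarrow> int) \<Rightarrow> nat \<Rightarrow> nat \<Rightarrow> int" where
  "clow_seq_sum n A h k = (\<Sum>W\<in>clow_seqs_from n A h k. (-1)^(k + length W) * clow_seq_wt A W)"

lemma clow_seq_sum_Suc_n: "clow_seq_sum n A (Suc n) k = (if k = 0 then 1 else 0)"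
  by (simp add: clow_seq_sum_def clow_seqs_from_Suc_n clow_seq_wt_def)

lemma clow_seq_sum_step:
  "clow_seq_sum n A h k = clow_seq_sum n A (Suc h) k -
    (\<Sum>m\<le>k. (-1)^m * (\<Sum>C\<in>clows_at n A h m. walk_weight A C) * clow_seq_sum n A (Suc h) (k - m))"
proof -
  define g where "g k W = (-1::int)^(k + length W) * clow_seq_wt A W" for k W
  have sign_split: "g k (C # W') = - ((-1)^m * walk_weight A C * g (k - m) W')"
    if "m \<le> k" "C \<in> clows_at n A h m" for m C W'
  proof -
    have "(-1::int)^(k + length (C # W')) = - ((-1)^m * (-1)^(k - m + length W'))"
      using \<open>m \<le> k\<close> by (simp flip: power_add)
    moreover have "clow_seq_wt A (C # W') = walk_weight A C * clow_seq_wt A W'"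
      by (simp add: clow_seq_wt_def prod_list_walk_edges)
    ultimately show ?thesis by (simp add: g_def)
  qed
  have "clow_seq_sum n A h k =
      (\<Sum>W\<in>clow_seqs_from n A h k - clow_seqs_from n A (Suc h) k. g k W) + clow_seq_sum n A (Suc h) k"
    unfolding clow_seq_sum_def g_def
    by (rule sum.subset_diff[OF _ finite_clow_seqs_from]) (auto simp: clow_seqs_from_def)
  also have "(\<Sum>W\<in>clow_seqs_from n A h k - clow_seqs_from n A (Suc h) k. g k W) =
      - (\<Sum>m\<le>k. (-1)^m * (\<Sum>C\<in>clows_at n A h m. walk_weight A C) * clow_seq_sum n A (Suc h) (k - m))"
    unfolding sum_clow_seqs_from_diff clow_seq_sum_def g_def[symmetric]
    by (simp add: sign_split sum_negf mult.assoc sum_product) (simp add: sum_distrib_left)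
  finally show ?thesis by simp
qed

lemma Abs_fps_clow_seq_sum_step:
  assumes "1 \<le> h" "h \<le> n"
  shows "Abs_fps (clow_seq_sum n A h) = Abs_fps (clow_seq_sum n A (Suc h)) * (1 - excursion_gf {Suc h..n} A h)"
proof (rule fps_ext)
  fix k
  have "fps_nth (excursion_gf {Suc h..n} A h * Abs_fps (clow_seq_sum n A (Suc h))) k =
      (\<Sum>m\<le>k. (-1)^m * (\<Sum>C\<in>clows_at n A h m. walk_weight A C) * clow_seq_sum n A (Suc h) (k - m))"
    by (simp add: fps_mult_nth excursion_gf_nth[OF assms] atLeast0AtMost)
  then show "fps_nth (Abs_fps (clow_seq_sum n A h)) k =
      fps_nth (Abs_fps (clow_seq_sum n A (Suc h)) * (1 - excursion_gf {Suc h..n} A h)) k"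
    by (simp add: right_diff_distrib mult.commute[of "Abs_fps _"] clow_seq_sum_step[of n A h k])
qed

lemma det_on_gf_matrix_eq_clow_seq_sum:
  assumes "1 \<le> h" "h \<le> Suc n"
  shows "det_on {h..n} (gf_matrix A) = Abs_fps (clow_seq_sum n A h)"
  using assms(2,1)
proof (induction h rule: inc_induct)
  case base
  show ?case by (intro fps_ext) (simp add: clow_seq_sum_Suc_n)
next
  case (step h)
  then have "{h..n} = insert h {Suc h..n}" by auto
  then show ?case
    using step det_on_gf_matrix_insert_factor[of "{Suc h..n}" h A] Abs_fps_clow_seq_sum_step[of h n A]
    by simp
qed

lemma fps_const_prod: "(\<Prod>x\<in>S. fps_const (a x)) = fps_const (\<Prod>x\<in>S. a x)"
  by (induction S rule: infinite_finite_induct) (simp_all add: fps_const_mult)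

lemma prod_gf_matrix:
  assumes "finite U"
  shows "(\<Prod>x\<in>U. gf_matrix A x (\<sigma> x)) =
    fps_const (\<Prod>i\<in>{i \<in> U. \<sigma> i \<noteq> i}. A i (\<sigma> i)) * fps_X ^ card {i \<in> U. \<sigma> i \<noteq> i}"
proof -
  have "(\<Prod>x\<in>U. gf_matrix A x (\<sigma> x)) = (\<Prod>x\<in>{i \<in> U. \<sigma> i \<noteq> i}. fps_const (A x (\<sigma> x)) * fps_X)"
    using assms by (intro prod.mono_neutral_cong_right) (auto simp: gf_matrix_def)
  then show ?thesis
    using assms by (simp add: prod.distrib fps_const_prod)
qed

lemma pdet_eq_nth_det_on_gf_matrix: "pdet n A k = fps_nth (det_on {1..n} (gf_matrix A)) k"
proof -
  let ?moved = "\<lambda>\<sigma>. {i \<in> {1..n}. \<sigma> i \<noteq> i}"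
  have "fps_nth (det_on {1..n} (gf_matrix A)) k =
      (\<Sum>\<sigma> | \<sigma> permutes {1..n}. if card (?moved \<sigma>) = k then sign \<sigma> * (\<Prod>i\<in>?moved \<sigma>. A i (\<sigma> i)) else 0)"
    unfolding det_on_def fps_sum_nth
  proof (intro sum.cong refl)
    fix \<sigma> :: "nat \<Rightarrow> nat"
    have "(of_int (sign \<sigma>) :: int fps) = fps_const (sign \<sigma>)"
      using fps_of_int[where 'a = int, of "sign \<sigma>"] by simp
    then show "fps_nth (of_int (sign \<sigma>) * (\<Prod>x\<in>{1..n}. gf_matrix A x (\<sigma> x))) k =
        (if card (?moved \<sigma>) = k then sign \<sigma> * (\<Prod>i\<in>?moved \<sigma>. A i (\<sigma> i)) else 0)"
      by (simp add: prod_gf_matrix mult.assoc[symmetric] fps_X_power_mult_right_nth flip: fps_const_mult)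
  qed
  also have "\<dots> = (\<Sum>\<sigma>\<in>S_nk n k. sign \<sigma> * (\<Prod>i\<in>?moved \<sigma>. A i (\<sigma> i)))"
    by (simp add: S_nk_def sum.inter_filter[symmetric] finite_permutations conj_commute)
  finally show ?thesis by (simp add: pdet_def)
qed

lemma clow_seq_sign_eq: "clow_seq_sign n k W = (-1)^(k + length W)"
proof -
  have "even (2 * int n - int k + int (length W)) \<longleftrightarrow> even (k + length W)"
    by presburger
  then show ?thesis by (simp add: clow_seq_sign_def)
qed

theorem lemma28:
  fixes n k :: nat and A :: "nat \<Rightarrow> nat \<Rightarrow> int"
  assumes "n > 0"
    and "\<forall>i \<in> {1..n}. \<forall>j \<in> {1..n}. A i j \<in> {0, 1}"
  shows "pdet n A k = (\<Sum>W \<in> clow_seqs n A k. clow_seq_sign n k W * clow_seq_wt A W)"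
proof -
  have "pdet n A k = fps_nth (det_on {1..n} (gf_matrix A)) k"
    by (rule pdet_eq_nth_det_on_gf_matrix)
  also have "\<dots> = clow_seq_sum n A 1 k"
    by (simp add: det_on_gf_matrix_eq_clow_seq_sum)
  also have "\<dots> = (\<Sum>W \<in> clow_seqs n A k. clow_seq_sign n k W * clow_seq_wt A W)"
    unfolding clow_seq_sum_def clow_seqs_from_1 clow_seq_sign_eq ..
  finally show ?thesis .
qed

end
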